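(* Let $\mathbf{A}\in\mathbb{R}^{m\times n}$, $b\in\mathcal{R}(\mathbf{A})$, and let $f:\mathbb{R}^n\to\mathbb{R}$ be finite everywhere and strongly convex. Let $\hat x$ be the unique solution of $\min_{x\in\mathbb{R}^n} f(x)$ subject to $\mathbf{A}x=b$, let $\Psi(y)=f^*(\mathbf{A}^\top y)-b^\top y$ for $y\in\mathbb{R}^m$, and let $\hat\Psi=\min_{y\in\mathbb{R}^m}\Psi(y)$. Let $(y^k)_k\subset\mathbb{R}^m$ be any sequence and define $d^k=\mathbf{A}^\top y^k$ and $x^k=\nabla f^*(d^k)$. Then for every $k$, $$D_f^{d^k}(x^k,\hat x)=\Psi(y^k)-\hat\Psi.$$
   Context: $f^*(x^* )=\sup_{y\in\mathbb{R}^n}\langle x^*,y\rangle-f(y)$ is the Fenchel conjugate; for strongly convex finite $f$ it is finite and differentiable, and $\nabla f^*(d)\in\mathbb{R}^n$ satisfies $d\in\partial f(\nabla f^*(d))$. For $x^*\in\partial f(x)$, the Bregman distance is $D_f^{x^*}(x,y)=f(y)-f(x)-\langle x^*,y-x\rangle$. The minimum $\hat\Psi$ of the dual function $\Psi$ is attained and strong duality $\hat\Psi=-f(\hat x)$ holds. *)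

theory Defs
  imports "HOL-Analysis.Analysis"
begin

definition strongly_convex :: "('a::real_inner \<Rightarrow> real) \<Rightarrow> bool" where
  "strongly_convex f \<longleftrightarrow> (\<exists>mu>0. \<forall>x y. \<forall>t::real. 0 \<le> t \<and> t \<le> 1 \<longrightarrow>
      f ((1 - t) *\<^sub>R x + t *\<^sub>R y) \<le> (1 - t) * f x + t * f y - mu / 2 * t * (1 - t) * (norm (x - y))^2)"

definition fconj :: "('a::real_inner \<Rightarrow> real) \<Rightarrow> 'a \<Rightarrow> real" where
  "fconj f xs = (SUP y. xs \<bullet> y - f y)"

definition grad :: "('a::real_inner \<Rightarrow> real) \<Rightarrow> 'a \<Rightarrow> 'a" where
  "grad g d = (SOME x. (g has_derivative (\<lambda>h. x \<bullet> h)) (at d))"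

definition bregman :: "('a::real_inner \<Rightarrow> real) \<Rightarrow> 'a \<Rightarrow> 'a \<Rightarrow> 'a \<Rightarrow> real" where
  "bregman f xs x y = f y - f x - xs \<bullet> (y - x)"

end

theory Submission
  imports Defs
begin

text \<open>
  For strongly convex \<open>f\<close> the supremum defining \<open>f\<^sup>*(d)\<close> is attained at
  a point \<open>x(d)\<close>, and quadratic growth of \<open>f - \<langle>d,\<cdot>\<rangle>\<close> around \<open>x(d)\<close> gives
  \<open>0 \<le> f\<^sup>*(d + e) - f\<^sup>*(d) - \<langle>e, x(d)\<rangle> \<le> \<parallel>e\<parallel>\<^sup>2/\<mu>\<close>.
  Hence \<open>\<nabla>f\<^sup>*(d) = x(d)\<close> and \<open>D\<^sub>f\<^sup>d(x(d), x) = f(x) + f\<^sup>*(d) - \<langle>d, x\<rangle>\<close>;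
  for \<open>d = A\<^sup>T y\<close> and \<open>x = xhat\<close> this is \<open>\<Psi>(y) + f(xhat)\<close>, so it remains to
  prove strong duality \<open>inf \<Psi> = -f(xhat)\<close>. Since \<open>f\<^sup>*(d) - \<langle>xhat, d\<rangle>\<close> is
  coercive, \<open>\<Psi>\<close> attains its minimum at some \<open>y\<^sup>*\<close>; there its gradient
  \<open>A x(A\<^sup>T y\<^sup>*) - b\<close> vanishes, so \<open>x(A\<^sup>T y\<^sup>*)\<close> is feasible and
  \<open>\<Psi>(y\<^sup>*) = -f(x(A\<^sup>T y\<^sup>*)) \<le> -f(xhat)\<close>.
\<close>

lemma continuous_attains_inf_bounded_sublevel:
  fixes g :: "'a::heine_borel \<Rightarrow> real"
  assumes "closed S" "continuous_on S g" "a \<in> S" "bounded {x \<in> S. g x \<le> g a}"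
  shows "\<exists>x\<in>S. \<forall>y\<in>S. g x \<le> g y"
proof -
  let ?L = "{x \<in> S. g x \<le> g a}"
  have "closed (S \<inter> g -` {..g a})"
    using continuous_closed_preimage[OF assms(2,1) closed_atMost] .
  moreover have "S \<inter> g -` {..g a} = ?L" by auto
  ultimately have "compact ?L"
    using assms(4) compact_eq_bounded_closed by auto
  moreover have "?L \<noteq> {}" using assms(3) by auto
  ultimately obtain x where x: "x \<in> ?L" "\<forall>y\<in>?L. g x \<le> g y"
    using continuous_attains_inf[of ?L g] continuous_on_subset[OF assms(2)] by auto
  have "g x \<le> g y" if "y \<in> S" for y
    using x that by (cases "g y \<le> g a") auto
  then show ?thesis using x by blast
qed

lemma grad_eqI:
  fixes g :: "'a::real_inner \<Rightarrow> real"
  assumes "(g has_derivative (\<lambda>h. p \<bullet> h)) (at x)"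
  shows "grad g x = p"
  unfolding grad_def
proof (rule some_equality)
  fix q assume "(g has_derivative (\<lambda>h. q \<bullet> h)) (at x)"
  then have "(\<lambda>h. q \<bullet> h) = (\<lambda>h. p \<bullet> h)" using assms has_derivative_unique by blast
  then have "(q - p) \<bullet> (q - p) = 0" by (metis inner_diff_left right_minus_eq)
  then show "q = p" by simp
qed (rule assms)

locale strongly_convex_fun =
  fixes f :: "'a::euclidean_space \<Rightarrow> real" and mu :: real
  assumes modulus_pos: "mu > 0"
    and strongly_convex_ineq: "\<And>x y t. 0 \<le> t \<Longrightarrow> t \<le> 1 \<Longrightarrow>
      f ((1 - t) *\<^sub>R x + t *\<^sub>R y) \<le> (1 - t) * f x + t * f y - mu / 2 * t * (1 - t) * (norm (x - y))^2"

lemma strongly_convex_iff_ex_modulus: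
  "strongly_convex f \<longleftrightarrow> (\<exists>mu. strongly_convex_fun f mu)"
  unfolding strongly_convex_def strongly_convex_fun_def by blast

definition conj_argmax :: "('a::real_inner \<Rightarrow> real) \<Rightarrow> 'a \<Rightarrow> 'a" where
  "conj_argmax f d = (SOME x. \<forall>y. d \<bullet> y - f y \<le> d \<bullet> x - f x)"

context strongly_convex_fun
begin

lemma convex_on_UNIV: "convex_on UNIV f"
  unfolding convex_on_def
proof (intro conjI ballI allI impI)
  fix x y :: 'a and u v :: real
  assume uv: "0 \<le> u" "0 \<le> v" "u + v = 1"
  then have u: "u = 1 - v" by simp
  have "f (u *\<^sub>R x + v *\<^sub>R y) \<le> u * f x + v * f y - mu / 2 * v * (1 - v) * (norm (x - y))^2"
    using strongly_convex_ineq[of v x y] uv u by simp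
  also have "\<dots> \<le> u * f x + v * f y"
    using modulus_pos uv u by (simp add: mult_nonneg_nonneg)
  finally show "f (u *\<^sub>R x + v *\<^sub>R y) \<le> u * f x + v * f y" .
qed simp

lemma continuous_on_UNIV: "continuous_on UNIV f"
  using convex_on_continuous[OF open_UNIV convex_on_UNIV] .

lemma strongly_convex_fun_minus_inner: "strongly_convex_fun (\<lambda>x. f x - d \<bullet> x) mu"
proof
  fix x y :: 'a and t :: real
  assume "0 \<le> t" "t \<le> 1"
  then show "f ((1 - t) *\<^sub>R x + t *\<^sub>R y) - d \<bullet> ((1 - t) *\<^sub>R x + t *\<^sub>R y)
    \<le> (1 - t) * (f x - d \<bullet> x) + t * (f y - d \<bullet> y) - mu / 2 * t * (1 - t) * (norm (x - y))\<^sup>2"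
    using strongly_convex_ineq[of t x y] by (simp add: inner_add_right algebra_simps)
qed (rule modulus_pos)

lemma quadratic_growth_at_min:
  assumes "\<forall>z. f x \<le> f z"
  shows "f x + mu / 4 * (norm (y - x))^2 \<le> f y"
proof -
  have "f x \<le> f ((1 - 1/2) *\<^sub>R x + (1/2) *\<^sub>R y)" using assms by blast
  also have "\<dots> \<le> (1 - 1/2) * f x + (1/2) * f y - mu / 2 * (1/2) * (1 - 1/2) * (norm (x - y))^2"
    by (rule strongly_convex_ineq) auto
  finally show ?thesis by (simp add: norm_minus_commute)
qed

lemma norm_le_if_le_at_origin:
  assumes m: "\<forall>q\<in>cball 0 1. m \<le> f q" and y: "f y \<le> f 0"
  shows "norm y \<le> 1 + 2 * (f 0 - m) / mu"
proof (cases "norm y \<le> 1")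
  case True
  have "m \<le> f 0" using m by simp
  then show ?thesis using True modulus_pos by (simp add: add_increasing2)
next
  case False
  define t where "t = 1 / norm y"
  have "y \<noteq> 0" using False by auto
  have t: "0 \<le> t" "t \<le> 1" using False by (auto simp: t_def divide_le_eq_1)
  have "m \<le> f (t *\<^sub>R y)" using m False by (simp add: t_def)
  also have "\<dots> \<le> (1 - t) * f 0 + t * f y - mu / 2 * (t * (1 - t) * (norm y)^2)"
    using strongly_convex_ineq[OF t, of 0 y] by (simp add: mult.assoc)
  also have "(1 - t) * f 0 + t * f y \<le> f 0"
    using mult_left_mono[OF y t(1)] by (simp add: algebra_simps)
  also have "t * (1 - t) * (norm y)^2 = norm y - 1"
    using \<open>y \<noteq> 0\<close> by (simp add: t_def power2_eq_square field_simps)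
  finally have "mu * (norm y - 1) \<le> 2 * (f 0 - m)" by simp
  then show ?thesis using modulus_pos by (simp add: field_simps)
qed

lemma exists_global_min: "\<exists>x. \<forall>y. f x \<le> f y"
proof -
  obtain p where "\<forall>q\<in>cball 0 1. f p \<le> f q"
    using continuous_attains_inf[of "cball 0 1" f] continuous_on_subset[OF continuous_on_UNIV]
    by auto
  then have "bounded {y. f y \<le> f 0}"
    unfolding bounded_iff using norm_le_if_le_at_origin by blast
  then show ?thesis
    using continuous_attains_inf_bounded_sublevel[of UNIV f 0] continuous_on_UNIV by auto
qed

lemma conj_argmax_max: "d \<bullet> y - f y \<le> d \<bullet> conj_argmax f d - f (conj_argmax f d)"
proof -
  interpret shifted: strongly_convex_fun "\<lambda>x. f x - d \<bullet> x" mu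
    by (rule strongly_convex_fun_minus_inner)
  have "\<exists>x. \<forall>y. d \<bullet> y - f y \<le> d \<bullet> x - f x"
    using shifted.exists_global_min by (metis minus_diff_eq neg_le_iff_le)
  from someI_ex[OF this] show ?thesis unfolding conj_argmax_def by blast
qed

lemma fconj_eq_conj_argmax: "fconj f d = d \<bullet> conj_argmax f d - f (conj_argmax f d)"
  unfolding fconj_def by (rule cSup_eq_maximum) (auto intro: conj_argmax_max)

lemma fenchel_young: "d \<bullet> x - f x \<le> fconj f d"
  using conj_argmax_max fconj_eq_conj_argmax by simp

lemma fconj_add_ge: "fconj f d + e \<bullet> conj_argmax f d \<le> fconj f (d + e)"
  using fenchel_young[of "d + e" "conj_argmax f d"]
  by (simp add: fconj_eq_conj_argmax inner_add_left)

lemma fconj_add_le: "fconj f (d + e) \<le> fconj f d + e \<bullet> conj_argmax f d + (norm e)^2 / mu"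
proof -
  interpret shifted: strongly_convex_fun "\<lambda>x. f x - d \<bullet> x" mu
    by (rule strongly_convex_fun_minus_inner)
  define x where "x = conj_argmax f d"
  have "(d + e) \<bullet> y - f y \<le> fconj f d + e \<bullet> x + (norm e)^2 / mu" for y
  proof -
    define r where "r = norm (y - x)"
    have "f x - d \<bullet> x \<le> f z - d \<bullet> z" for z
      using conj_argmax_max[of d z] unfolding x_def by linarith
    then have growth: "f x - d \<bullet> x + mu / 4 * r^2 \<le> f y - d \<bullet> y"
      unfolding r_def by (intro shifted.quadratic_growth_at_min) blast
    have cauchy_schwarz: "e \<bullet> (y - x) \<le> norm e * r"
      unfolding r_def by (rule norm_cauchy_schwarz)
    \<comment> \<open>AM-GM: \<open>\<parallel>e\<parallel> r \<le> \<mu> r\<^sup>2/4 + \<parallel>e\<parallel>\<^sup>2/\<mu>\<close>\<close>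
    have "0 \<le> (norm e - mu * r / 2)^2" by simp
    then have "mu * (norm e * r - mu / 4 * r^2) \<le> (norm e)^2"
      by (simp add: power2_eq_square algebra_simps)
    then have am_gm: "norm e * r - mu / 4 * r^2 \<le> (norm e)^2 / mu"
      using modulus_pos by (simp add: field_simps)
    have "(d + e) \<bullet> y - f y = e \<bullet> (y - x) + e \<bullet> x - (f y - d \<bullet> y)"
      by (simp add: algebra_simps)
    also have "\<dots> \<le> (d \<bullet> x - f x) + e \<bullet> x + (norm e)^2 / mu"
      using growth cauchy_schwarz am_gm by linarith
    finally show ?thesis unfolding x_def fconj_eq_conj_argmax .
  qed
  then show ?thesis unfolding fconj_def[of f "d + e"] x_def by (intro cSUP_least) auto
qed

lemma has_derivative_fconj: "(fconj f has_derivative (\<lambda>h. conj_argmax f d \<bullet> h)) (at d)"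
  unfolding has_derivative_at_alt
proof (intro conjI allI impI)
  fix \<epsilon> :: real assume "\<epsilon> > 0"
  show "\<exists>\<delta>>0. \<forall>y. norm (y - d) < \<delta> \<longrightarrow>
      norm (fconj f y - fconj f d - conj_argmax f d \<bullet> (y - d)) \<le> \<epsilon> * norm (y - d)"
  proof (intro exI[of _ "\<epsilon> * mu"] conjI allI impI)
    show "0 < \<epsilon> * mu" using \<open>\<epsilon> > 0\<close> modulus_pos by simp
    fix y assume y: "norm (y - d) < \<epsilon> * mu"
    define h where "h = y - d"
    have "(norm h)^2 / mu \<le> \<epsilon> * norm h"
      using y modulus_pos mult_right_mono[of "norm h" "\<epsilon> * mu" "norm h"]
      by (simp add: h_def field_simps power2_eq_square)
    then show "norm (fconj f y - fconj f d - conj_argmax f d \<bullet> (y - d)) \<le> \<epsilon> * norm (y - d)"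
      using fconj_add_ge[of d h] fconj_add_le[of d h]
      by (simp add: h_def inner_commute abs_le_iff)
  qed
qed (rule bounded_linear_inner_right)

lemma grad_fconj: "grad (fconj f) d = conj_argmax f d"
  by (rule grad_eqI) (rule has_derivative_fconj)

lemma continuous_on_fconj: "continuous_on UNIV (fconj f)"
  using has_derivative_continuous[OF has_derivative_fconj]
  by (simp add: continuous_at_imp_continuous_on)

lemma bregman_conj_argmax: "bregman f d (conj_argmax f d) x = f x + fconj f d - d \<bullet> x"
  unfolding bregman_def fconj_eq_conj_argmax by (simp add: inner_diff_right)

lemma fconj_minus_inner_coercive: "\<exists>M. \<forall>d. norm d - M \<le> fconj f d - x \<bullet> d"
proof -
  obtain q where q: "\<forall>u\<in>cball x 1. f u \<le> f q"
    using continuous_attains_sup[of "cball x 1" f] continuous_on_subset[OF continuous_on_UNIV]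
    by auto
  have "norm d - f q \<le> fconj f d - x \<bullet> d" for d
  proof -
    have "d \<bullet> sgn d = norm d"
      by (cases "d = 0")
        (simp_all add: sgn_div_norm power2_norm_eq_inner[symmetric] power2_eq_square)
    moreover have "f (x + sgn d) \<le> f q" using q by (simp add: dist_norm norm_sgn)
    ultimately show ?thesis
      using fenchel_young[of d "x + sgn d"] by (simp add: inner_add_right inner_commute)
  qed
  then show ?thesis by blast
qed

lemma dual_attains_min:
  fixes L :: "'a \<Rightarrow> 'b::euclidean_space"
  assumes "linear L" and "L xhat = b"
  shows "\<exists>z0. \<forall>z. fconj f (adjoint L z0) - b \<bullet> z0 \<le> fconj f (adjoint L z) - b \<bullet> z"
proof -
  define H where "H d = fconj f d - xhat \<bullet> d" for d
  have dual_eq: "fconj f (adjoint L z) - b \<bullet> z = H (adjoint L z)" for z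
    using adjoint_works[OF assms(1), of xhat z] assms(2) by (simp add: H_def inner_commute)
  define W where "W = range (adjoint L)"
  have "subspace W"
    unfolding W_def by (rule linear_subspace_image[OF adjoint_linear[OF assms(1)] subspace_UNIV])
  then have "closed W" "0 \<in> W" by (simp_all add: closed_subspace subspace_0)
  have "continuous_on W H"
    unfolding H_def by (intro continuous_intros continuous_on_subset[OF continuous_on_fconj]) auto
  obtain M where M: "\<And>d. norm d - M \<le> H d"
    using fconj_minus_inner_coercive[of xhat] unfolding H_def by blast
  have "norm d \<le> H 0 + M" if "H d \<le> H 0" for d
    using M[of d] that by linarith
  then have "bounded {d \<in> W. H d \<le> H 0}"
    unfolding bounded_iff by blast
  then obtain d0 where "d0 \<in> W" "\<forall>d\<in>W. H d0 \<le> H d"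
    using continuous_attains_inf_bounded_sublevel[of W H 0] \<open>closed W\<close> \<open>0 \<in> W\<close>
      \<open>continuous_on W H\<close> by blast
  then show ?thesis
    unfolding dual_eq W_def by auto
qed

lemma dual_min_imp_feasible:
  fixes L :: "'a \<Rightarrow> 'b::euclidean_space"
  assumes "linear L"
    and min: "\<forall>z. fconj f (adjoint L z0) - b \<bullet> z0 \<le> fconj f (adjoint L z) - b \<bullet> z"
  shows "L (conj_argmax f (adjoint L z0)) = b"
proof -
  define x where "x = conj_argmax f (adjoint L z0)"
  have "((\<lambda>z. fconj f (adjoint L z)) has_derivative (\<lambda>h. x \<bullet> adjoint L h)) (at z0)"
    unfolding x_def
    by (rule has_derivative_compose[OF linear_imp_has_derivative has_derivative_fconj])
      (rule adjoint_linear[OF assms(1)])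
  then have "((\<lambda>z. fconj f (adjoint L z) - b \<bullet> z)
      has_derivative (\<lambda>h. x \<bullet> adjoint L h - b \<bullet> h)) (at z0)"
    by (intro derivative_intros)
  moreover have "(\<lambda>h. x \<bullet> adjoint L h - b \<bullet> h) = (\<lambda>h. (L x - b) \<bullet> h)"
    by (simp add: adjoint_works[OF assms(1)] inner_diff_left)
  ultimately have "(\<lambda>h. (L x - b) \<bullet> h) = (\<lambda>h. 0)"
    using differential_zero_maxmin[of z0 UNIV] min by auto
  then have "(L x - b) \<bullet> (L x - b) = 0" by metis
  then show ?thesis unfolding x_def by simp
qed

lemma strong_duality:
  fixes L :: "'a \<Rightarrow> 'b::euclidean_space"
  assumes "linear L" and "L xhat = b" and "\<forall>x. L x = b \<longrightarrow> f xhat \<le> f x"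
  shows "(INF z. fconj f (adjoint L z) - b \<bullet> z) = - f xhat"
proof (rule antisym)
  have weak_duality: "- f xhat \<le> fconj f (adjoint L z) - b \<bullet> z" for z
    using fenchel_young[of "adjoint L z" xhat] adjoint_works[OF assms(1), of xhat z] assms(2)
    by (simp add: inner_commute)
  then show "- f xhat \<le> (INF z. fconj f (adjoint L z) - b \<bullet> z)"
    by (intro cINF_greatest) auto
  obtain z0 where z0: "\<forall>z. fconj f (adjoint L z0) - b \<bullet> z0 \<le> fconj f (adjoint L z) - b \<bullet> z"
    using dual_attains_min[OF assms(1,2)] by blast
  define x0 where "x0 = conj_argmax f (adjoint L z0)"
  have "L x0 = b"
    unfolding x0_def by (rule dual_min_imp_feasible[OF assms(1) z0])
  have "(INF z. fconj f (adjoint L z) - b \<bullet> z) \<le> fconj f (adjoint L z0) - b \<bullet> z0"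
    using weak_duality by (intro cINF_lower bdd_belowI2) auto
  also have "\<dots> = - f x0"
    using adjoint_works[OF assms(1), of x0 z0] \<open>L x0 = b\<close>
    by (simp add: fconj_eq_conj_argmax x0_def inner_commute)
  also have "\<dots> \<le> - f xhat"
    using assms(3) \<open>L x0 = b\<close> by simp
  finally show "(INF z. fconj f (adjoint L z) - b \<bullet> z) \<le> - f xhat" .
qed

end

theorem lemma1:
  fixes A :: "real^'n^'m" and b :: "real^'m" and f :: "real^'n \<Rightarrow> real"
    and xhat :: "real^'n" and y :: "nat \<Rightarrow> real^'m"
  assumes hb: "b \<in> range (\<lambda>x. A *v x)"
    and hf: "strongly_convex f"
    and hxhat: "A *v xhat = b" "\<forall>x. A *v x = b \<longrightarrow> f xhat \<le> f x"
  shows "\<forall>k. bregman f (transpose A *v y k) (grad (fconj f) (transpose A *v y k)) xhat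
            = (fconj f (transpose A *v y k) - b \<bullet> y k)
              - (INF z. fconj f (transpose A *v z) - b \<bullet> z)"
proof
  \<comment> \<open>\<open>hb\<close> is implied by \<open>hxhat\<close>.\<close>
  fix k
  obtain mu where "strongly_convex_fun f mu"
    using hf strongly_convex_iff_ex_modulus by blast
  then interpret strongly_convex_fun f mu .
  have "(INF z. fconj f (transpose A *v z) - b \<bullet> z) = - f xhat"
    using strong_duality[OF matrix_vector_mul_linear hxhat] by (simp add: adjoint_matrix)
  moreover have "(transpose A *v y k) \<bullet> xhat = y k \<bullet> (A *v xhat)"
    by (simp add: transpose_matrix_vector dot_lmul_matrix)
  ultimately show "bregman f (transpose A *v y k) (grad (fconj f) (transpose A *v y k)) xhat
      = (fconj f (transpose A *v y k) - b \<bullet> y k) - (INF z. fconj f (transpose A *v z) - b \<bullet> z)"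
    using hxhat(1) by (simp add: grad_fconj bregman_conj_argmax inner_commute)
qed

end
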